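(* Let $\Omega\subset\mathbb{P}(\mathbb{R}^d)$ be a properly convex domain and $S\subset\Omega$ a properly embedded simplex. If $g\in\mathrm{Aut}(\Omega)$ fixes every vertex of $S$, then $S\subset\mathrm{Min}(g)$.
   Context: Properly convex domain: open subset of $\mathbb{P}(\mathbb{R}^d)$ which is a bounded convex set in some affine chart. Simplex: $S$ with $hS=\{[x_1:\dots:x_k:0:\dots:0]:x_i>0\}$ for some $h\in\mathrm{PGL}_d(\mathbb{R})$, $1\le k\le d$, vertices $h^{-1}[e_1],\dots,h^{-1}[e_k]$. Properly embedded: the inclusion $S\hookrightarrow\Omega$ is proper. Hilbert metric $H_\Omega(x,y)=\frac12\log\frac{|x-b||y-a|}{|x-a||y-b|}$ ($a,b$ boundary points on the line through $x,y$ ordered $a,x,y,b$). $\tau_\Omega(g)=\inf_{x\in\Omega}H_\Omega(x,gx)$ and $\mathrm{Min}(g)=\{x\in\Omega:H_\Omega(x,gx)=\tau_\Omega(g)\}$. *)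

theory Defs
  imports "HOL-Analysis.Analysis"
begin

text \<open>A point of the projective space P(R^d) is the line spanned by a
nonzero vector of R^d = real^'n. A subset of P(R^d) is represented by its cone:
the set of all nonzero vectors whose line lies in the subset (closed under
multiplication by nonzero scalars). Projective maps (elements of PGL_d) are
represented by invertible matrices.\<close>

definition pcone :: "(real^'n) set \<Rightarrow> bool" where
  "pcone A \<longleftrightarrow> 0 \<notin> A \<and> (\<forall>x\<in>A. \<forall>c. c \<noteq> 0 \<longrightarrow> c *\<^sub>R x \<in> A)"

text \<open>A projective set is compact iff its trace on the unit sphere is compact
(the sphere double covers P(R^d)).\<close>
definition pcompact :: "(real^'n) set \<Rightarrow> bool" where
  "pcompact K \<longleftrightarrow> compact (K \<inter> sphere 0 1)"

text \<open>The affine chart {[x] : a.x \<noteq> 0}, identified with the affine hyperplane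
a.x = 1, in which the set is a bounded convex set.\<close>
definition good_chart :: "(real^'n) set \<Rightarrow> real^'n \<Rightarrow> bool" where
  "good_chart \<Omega> a \<longleftrightarrow> (\<forall>x\<in>\<Omega>. a \<bullet> x \<noteq> 0) \<and>
      bounded {x\<in>\<Omega>. a \<bullet> x = 1} \<and> convex {x\<in>\<Omega>. a \<bullet> x = 1}"

definition properly_convex_domain :: "(real^'n) set \<Rightarrow> bool" where
  "properly_convex_domain \<Omega> \<longleftrightarrow> pcone \<Omega> \<and> \<Omega> \<noteq> {} \<and> open \<Omega> \<and> (\<exists>a. good_chart \<Omega> a)"

text \<open>Simplex: h S = {[x_1 : ... : x_k : 0 ... 0] : x_i > 0}; the index set of the
positive coordinates is a nonempty set I of coordinates (up to a permutation
matrix, which is absorbed into h, this is the set of the first k coordinates).\<close>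
definition simplex_of :: "real^'n^'n \<Rightarrow> 'n set \<Rightarrow> (real^'n) set" where
  "simplex_of h I = {c *\<^sub>R (matrix_inv h *v y) | c y.
      c \<noteq> 0 \<and> (\<forall>i\<in>I. y $ i > 0) \<and> (\<forall>i. i \<notin> I \<longrightarrow> y $ i = 0)}"

definition simplex_vertices :: "real^'n^'n \<Rightarrow> 'n set \<Rightarrow> (real^'n) set" where
  "simplex_vertices h I = (\<lambda>i. matrix_inv h *v axis i 1) ` I"

definition properly_embedded :: "(real^'n) set \<Rightarrow> (real^'n) set \<Rightarrow> bool" where
  "properly_embedded S \<Omega> \<longleftrightarrow> S \<subseteq> \<Omega> \<and>
     (\<forall>K. pcone K \<and> K \<subseteq> \<Omega> \<and> pcompact K \<longrightarrow> pcompact (S \<inter> K))"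

text \<open>Hilbert metric, computed in a chart where \<Omega> is bounded and convex
(the value does not depend on the chart). For x \<noteq> y in the chart,
p and q are the boundary points with p, x, y, q in this order.\<close>
definition hilbert_dist :: "(real^'n) set \<Rightarrow> real^'n \<Rightarrow> real^'n \<Rightarrow> real" where
  "hilbert_dist \<Omega> x y =
    (let a = (SOME a. good_chart \<Omega> a);
         D = {z\<in>\<Omega>. a \<bullet> z = 1};
         x' = (1 / (a \<bullet> x)) *\<^sub>R x;
         y' = (1 / (a \<bullet> y)) *\<^sub>R y
     in if x' = y' then 0 else
       (let s = Sup {s. s \<ge> 0 \<and> x' + s *\<^sub>R (x' - y') \<in> D};
            t = Sup {t. t \<ge> 0 \<and> y' + t *\<^sub>R (y' - x') \<in> D};
            p = x' + s *\<^sub>R (x' - y');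
            q = y' + t *\<^sub>R (y' - x')
        in (1/2) * ln ((dist x' q * dist y' p) / (dist x' p * dist y' q))))"

definition is_automorphism :: "(real^'n) set \<Rightarrow> real^'n^'n \<Rightarrow> bool" where
  "is_automorphism \<Omega> g \<longleftrightarrow> invertible g \<and> (\<lambda>x. g *v x) ` \<Omega> = \<Omega>"

definition translation_length :: "(real^'n) set \<Rightarrow> real^'n^'n \<Rightarrow> real" where
  "translation_length \<Omega> g = (INF x\<in>\<Omega>. hilbert_dist \<Omega> x (g *v x))"

definition Min_set :: "(real^'n) set \<Rightarrow> real^'n^'n \<Rightarrow> (real^'n) set" where
  "Min_set \<Omega> g = {x\<in>\<Omega>. hilbert_dist \<Omega> x (g *v x) = translation_length \<Omega> g}"

end

theory Submission
  imports Defs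
begin

text \<open>Fix an affine chart a in which \<Omega> is bounded and convex, and let
  C = {x \<in> \<Omega>. a \<bullet> x > 0} be the corresponding half cone. After multiplying g by a sign, g
  and g\<inverse> preserve C, and the eigenvalues of g at the vertices of S become positive; let M
  and m be the largest and the smallest of them. For y, z \<in> C the Hilbert distance is
  -1/2 ln (c1 c2), where c1 and c2 are the suprema of the r with y - r z \<in> C and with
  z - r y \<in> C. For z = g y, iterating g on y - r g y against an eigenvector of M gives
  c1 \<le> 1/M, and the same argument for g\<inverse> gives c2 \<le> m; hence every point is moved by at
  least 1/2 ln (M/m). On S, g acts diagonally in the simplex coordinates, so x - r g x and
  g x - r x stay in S \<subseteq> \<Omega> for r < 1/M and r < m: the points of S are moved by exactly
  1/2 ln (M/m), the translation length.\<close>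

section \<open>Cones and affine charts\<close>

definition chart :: "(real^'n) set \<Rightarrow> real^'n" where
  "chart \<Omega> = (SOME a. good_chart \<Omega> a)"

definition chart_point :: "real^'n \<Rightarrow> real^'n \<Rightarrow> real^'n" where
  "chart_point a x = (1 / (a \<bullet> x)) *\<^sub>R x"

definition half_cone :: "(real^'n) set \<Rightarrow> real^'n \<Rightarrow> (real^'n) set" where
  "half_cone \<Omega> a = {x\<in>\<Omega>. 0 < a \<bullet> x}"

lemma properly_convex_domainD:
  assumes "properly_convex_domain \<Omega>"
  shows "pcone \<Omega>" "open \<Omega>" "\<Omega> \<noteq> {}" "good_chart \<Omega> (chart \<Omega>)"
  using assms unfolding properly_convex_domain_def chart_def by (auto intro: someI_ex)

lemma pcone_scaleR: "pcone \<Omega> \<Longrightarrow> x \<in> \<Omega> \<Longrightarrow> c \<noteq> 0 \<Longrightarrow> c *\<^sub>R x \<in> \<Omega>"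
  unfolding pcone_def by blast

lemma good_chart_inner_nonzero: "good_chart \<Omega> a \<Longrightarrow> x \<in> \<Omega> \<Longrightarrow> a \<bullet> x \<noteq> 0"
  unfolding good_chart_def by blast

lemma half_cone_scaleR:
  "pcone \<Omega> \<Longrightarrow> x \<in> half_cone \<Omega> a \<Longrightarrow> c > 0 \<Longrightarrow> c *\<^sub>R x \<in> half_cone \<Omega> a"
  unfolding half_cone_def by (auto intro: pcone_scaleR)

lemma half_cone_or_uminus:
  assumes "pcone \<Omega>" "good_chart \<Omega> a" "x \<in> \<Omega>"
  shows "x \<in> half_cone \<Omega> a \<or> - x \<in> half_cone \<Omega> a"
  using good_chart_inner_nonzero[OF assms(2,3)] pcone_scaleR[OF assms(1,3), of "-1"]
  unfolding half_cone_def by (auto simp: assms(3))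

lemma open_half_cone: "open \<Omega> \<Longrightarrow> open (half_cone \<Omega> a)"
  unfolding half_cone_def using open_halfspace_gt[of 0 a] by (simp add: Collect_conj_eq open_Int)

lemma chart_point_in_chart:
  assumes "pcone \<Omega>" "x \<in> half_cone \<Omega> a"
  shows "chart_point a x \<in> \<Omega>" "a \<bullet> chart_point a x = 1"
  using assms pcone_scaleR[OF assms(1)] unfolding half_cone_def chart_point_def by auto

text \<open>The half cone is the cone over the convex chart section.\<close>
lemma half_cone_add:
  assumes pc: "pcone \<Omega>" and gc: "good_chart \<Omega> a"
    and x: "x \<in> half_cone \<Omega> a" and z: "z \<in> half_cone \<Omega> a"
  shows "x + z \<in> half_cone \<Omega> a"
proof -
  let ?D = "{x\<in>\<Omega>. a \<bullet> x = 1}"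
  have ax: "a \<bullet> x > 0" and az: "a \<bullet> z > 0" using x z unfolding half_cone_def by auto
  have "chart_point a x \<in> ?D" "chart_point a z \<in> ?D"
    using chart_point_in_chart[OF pc x] chart_point_in_chart[OF pc z] by auto
  moreover have "convex ?D" using gc unfolding good_chart_def by blast
  ultimately have "(a \<bullet> x / (a \<bullet> x + a \<bullet> z)) *\<^sub>R chart_point a x
      + (a \<bullet> z / (a \<bullet> x + a \<bullet> z)) *\<^sub>R chart_point a z \<in> ?D"
    using ax az by (intro convexD) (auto simp: add_divide_distrib[symmetric])
  also have "(a \<bullet> x / (a \<bullet> x + a \<bullet> z)) *\<^sub>R chart_point a x
      + (a \<bullet> z / (a \<bullet> x + a \<bullet> z)) *\<^sub>R chart_point a z = (1 / (a \<bullet> x + a \<bullet> z)) *\<^sub>R (x + z)"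
    using ax az unfolding chart_point_def by (simp add: scaleR_add_right)
  finally have "(1 / (a \<bullet> x + a \<bullet> z)) *\<^sub>R (x + z) \<in> half_cone \<Omega> a"
    unfolding half_cone_def by auto
  from half_cone_scaleR[OF pc this, of "a \<bullet> x + a \<bullet> z"] ax az show ?thesis by simp
qed

lemma half_cone_chart_point_eq:
  assumes "y \<in> half_cone \<Omega> a" "chart_point a y = chart_point a z"
  shows "z = ((a \<bullet> z) / (a \<bullet> y)) *\<^sub>R y"
proof -
  have "a \<bullet> z \<noteq> 0"
    using assms unfolding half_cone_def chart_point_def by (auto dest: arg_cong[of _ _ "inner a"])
  hence "z = (a \<bullet> z) *\<^sub>R chart_point a z" unfolding chart_point_def by simp
  also have "\<dots> = (a \<bullet> z) *\<^sub>R chart_point a y" using assms(2) by simp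
  finally show ?thesis unfolding chart_point_def by simp
qed

lemma half_cone_perturb:
  assumes op: "open \<Omega>" and y: "y \<in> half_cone \<Omega> a"
  obtains \<epsilon> where "\<epsilon> > 0" "y - \<epsilon> *\<^sub>R v \<in> half_cone \<Omega> a"
proof -
  have "((\<lambda>t. y - t *\<^sub>R v) \<longlongrightarrow> y) (at_right 0)" by (intro tendsto_eq_intros) auto
  hence "eventually (\<lambda>t. y - t *\<^sub>R v \<in> half_cone \<Omega> a) (at_right 0)"
    by (rule topological_tendstoD[OF _ open_half_cone[OF op] y])
  then obtain b where "b > 0" "\<And>t. t > 0 \<Longrightarrow> t < b \<Longrightarrow> y - t *\<^sub>R v \<in> half_cone \<Omega> a"
    unfolding eventually_at_right_field by auto
  thus ?thesis using that[of "b / 2"] by simp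
qed

text \<open>If a \<bullet> v = 0, the points v + \<epsilon> w, rescaled into the chart section, would have norm
  of order |v| / \<epsilon>, contradicting boundedness of the section.\<close>
lemma good_chart_inner_nonzero_limit:
  assumes pc: "pcone \<Omega>" and gc: "good_chart \<Omega> a"
    and v: "v \<noteq> 0" and aw: "a \<bullet> w \<noteq> 0" and vw: "\<And>\<epsilon>. \<epsilon> > 0 \<Longrightarrow> v + \<epsilon> *\<^sub>R w \<in> \<Omega>"
  shows "a \<bullet> v \<noteq> 0"
proof
  assume av: "a \<bullet> v = 0"
  obtain B where B: "\<And>z. z \<in> \<Omega> \<Longrightarrow> a \<bullet> z = 1 \<Longrightarrow> norm z \<le> B"
    using gc unfolding good_chart_def bounded_iff by blast
  have bound: "norm (v + \<epsilon> *\<^sub>R w) \<le> \<epsilon> * (B * \<bar>a \<bullet> w\<bar>)" if \<epsilon>: "\<epsilon> > 0" for \<epsilon>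
  proof -
    define k where "k = 1 / (\<epsilon> * (a \<bullet> w))"
    have "k \<noteq> 0" using \<epsilon> aw unfolding k_def by simp
    hence "k *\<^sub>R (v + \<epsilon> *\<^sub>R w) \<in> \<Omega>" using pcone_scaleR[OF pc vw[OF \<epsilon>]] by simp
    moreover have "a \<bullet> (k *\<^sub>R (v + \<epsilon> *\<^sub>R w)) = 1" using av \<epsilon> aw unfolding k_def by (simp add: inner_add_right)
    ultimately have "\<bar>k\<bar> * norm (v + \<epsilon> *\<^sub>R w) \<le> B" using B by fastforce
    thus ?thesis using \<epsilon> aw unfolding k_def by (simp add: abs_mult field_simps)
  qed
  have "eventually (\<lambda>\<epsilon>. norm (v + \<epsilon> *\<^sub>R w) \<le> \<epsilon> * (B * \<bar>a \<bullet> w\<bar>)) (at_right 0)"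
    using eventually_at_right_less[of "0::real"] by (rule eventually_mono) (rule bound)
  moreover have "((\<lambda>\<epsilon>. norm (v + \<epsilon> *\<^sub>R w)) \<longlongrightarrow> norm v) (at_right 0)"
    by (intro tendsto_eq_intros) auto
  moreover have "((\<lambda>\<epsilon>. \<epsilon> * (B * \<bar>a \<bullet> w\<bar>)) \<longlongrightarrow> 0) (at_right 0)"
    by (intro tendsto_eq_intros) auto
  ultimately have "norm v \<le> 0" by (intro tendsto_le[of "at_right (0::real)"]) auto
  with v show False by simp
qed

section \<open>The Hilbert distance in terms of the cone\<close>

lemma hilbert_dist_scaleR_left: "c \<noteq> 0 \<Longrightarrow> hilbert_dist \<Omega> (c *\<^sub>R x) z = hilbert_dist \<Omega> x z"
  by (simp add: hilbert_dist_def)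

lemma hilbert_dist_scaleR_right: "c \<noteq> 0 \<Longrightarrow> hilbert_dist \<Omega> x (c *\<^sub>R z) = hilbert_dist \<Omega> x z"
  by (simp add: hilbert_dist_def)

lemma hilbert_dist_uminus: "hilbert_dist \<Omega> (- x) (- z) = hilbert_dist \<Omega> x z"
  using hilbert_dist_scaleR_left[of "-1" \<Omega> x "- z"] hilbert_dist_scaleR_right[of "-1" \<Omega> x z] by simp

lemma hilbert_dist_same_chart_point:
  "chart_point (chart \<Omega>) x = chart_point (chart \<Omega>) z \<Longrightarrow> hilbert_dist \<Omega> x z = 0"
  unfolding hilbert_dist_def Let_def chart_def chart_point_def by simp

text \<open>For P \<noteq> Q in the chart section, the boundary point beyond P on the line QP is
  P + s (P - Q) with s the exit time; its distances to P and Q are s |P - Q| and (1 + s) |P - Q|.\<close>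
definition exit_params :: "(real^'n) set \<Rightarrow> real^'n \<Rightarrow> real^'n \<Rightarrow> real^'n \<Rightarrow> real set" where
  "exit_params \<Omega> a P Q = {s. s \<ge> 0 \<and> P + s *\<^sub>R (P - Q) \<in> {z\<in>\<Omega>. a \<bullet> z = 1}}"

definition exit_time :: "(real^'n) set \<Rightarrow> real^'n \<Rightarrow> real^'n \<Rightarrow> real^'n \<Rightarrow> real" where
  "exit_time \<Omega> a P Q = Sup (exit_params \<Omega> a P Q)"

lemma exit_params_nonneg: "s \<in> exit_params \<Omega> a P Q \<Longrightarrow> s \<ge> 0"
  unfolding exit_params_def by simp

lemma exit_time_pos:
  assumes gc: "good_chart \<Omega> a" and op: "open \<Omega>"
    and P: "P \<in> \<Omega>" "a \<bullet> P = 1" and Q: "a \<bullet> Q = 1" and PQ: "P \<noteq> Q"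
  shows "0 \<in> exit_params \<Omega> a P Q" "bdd_above (exit_params \<Omega> a P Q)" "exit_time \<Omega> a P Q > 0"
proof -
  let ?X = "exit_params \<Omega> a P Q"
  have nz: "norm (P - Q) > 0" using PQ by simp
  show "0 \<in> ?X" using P unfolding exit_params_def by simp
  obtain B where B: "\<And>z. z \<in> \<Omega> \<Longrightarrow> a \<bullet> z = 1 \<Longrightarrow> norm z \<le> B"
    using gc unfolding good_chart_def bounded_iff by blast
  have "s \<le> 2 * B / norm (P - Q)" if s: "s \<in> ?X" for s
  proof -
    have "norm (P + s *\<^sub>R (P - Q)) \<le> B" "s \<ge> 0" using B s unfolding exit_params_def by auto
    moreover have "norm (s *\<^sub>R (P - Q)) \<le> norm (P + s *\<^sub>R (P - Q)) + norm P"
      by (metis add_diff_cancel_left' norm_triangle_ineq4)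
    ultimately have "s * norm (P - Q) \<le> 2 * B" using B[OF P] by simp
    thus ?thesis using nz by (simp add: pos_le_divide_eq)
  qed
  thus bdd: "bdd_above ?X" by (auto simp: bdd_above_def)
  obtain e where e: "e > 0" "ball P e \<subseteq> \<Omega>" using op P(1) open_contains_ball by blast
  define s where "s = e / (2 * norm (P - Q))"
  have s0: "s > 0" using e nz unfolding s_def by simp
  have "norm (s *\<^sub>R (P - Q)) = e / 2" using e(1) nz unfolding s_def by simp
  hence "P + s *\<^sub>R (P - Q) \<in> \<Omega>" using e by (auto simp: dist_norm)
  moreover have "a \<bullet> (P + s *\<^sub>R (P - Q)) = 1" using P Q by (simp add: inner_add_right inner_diff_right)
  ultimately have "s \<in> ?X" using s0 unfolding exit_params_def by simp
  hence "s \<le> exit_time \<Omega> a P Q" using bdd unfolding exit_time_def by (intro cSup_upper)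
  thus "exit_time \<Omega> a P Q > 0" using s0 by simp
qed

lemma hilbert_dist_exit_times:
  fixes y z :: "real^'n"
  assumes pcd: "properly_convex_domain \<Omega>"
    and y: "y \<in> half_cone \<Omega> (chart \<Omega>)" and z: "z \<in> half_cone \<Omega> (chart \<Omega>)"
    and PQ: "chart_point (chart \<Omega>) y \<noteq> chart_point (chart \<Omega>) z"
  defines "s \<equiv> exit_time \<Omega> (chart \<Omega>) (chart_point (chart \<Omega>) y) (chart_point (chart \<Omega>) z)"
    and "t \<equiv> exit_time \<Omega> (chart \<Omega>) (chart_point (chart \<Omega>) z) (chart_point (chart \<Omega>) y)"
  shows "s > 0" "t > 0" "hilbert_dist \<Omega> y z = ln ((1 + s) / s * ((1 + t) / t)) / 2"
proof -
  note \<Omega> = properly_convex_domainD[OF pcd]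
  define P Q where "P = chart_point (chart \<Omega>) y" and "Q = chart_point (chart \<Omega>) z"
  note P = chart_point_in_chart[OF \<Omega>(1) y, folded P_def]
  note Q = chart_point_in_chart[OF \<Omega>(1) z, folded Q_def]
  show s: "s > 0" and t: "t > 0" unfolding s_def t_def P_def[symmetric] Q_def[symmetric]
    using exit_time_pos(3)[OF \<Omega>(4,2) P Q(2)] exit_time_pos(3)[OF \<Omega>(4,2) Q P(2)] PQ
    unfolding P_def Q_def by auto
  let ?p = "P + s *\<^sub>R (P - Q)" and ?q = "Q + t *\<^sub>R (Q - P)"
  have n: "norm (P - Q) > 0" using PQ unfolding P_def Q_def by simp
  have "hilbert_dist \<Omega> y z = 1/2 * ln ((dist P ?q * dist Q ?p) / (dist P ?p * dist Q ?q))"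
    using PQ unfolding hilbert_dist_def Let_def chart_def[symmetric] P_def Q_def chart_point_def
      s_def t_def exit_time_def exit_params_def by simp
  moreover have "dist P ?q = (1 + t) * norm (P - Q)"
  proof -
    have "P - ?q = (1 + t) *\<^sub>R (P - Q)" by (simp add: algebra_simps)
    thus ?thesis using t unfolding dist_norm by simp
  qed
  moreover have "dist Q ?p = (1 + s) * norm (P - Q)"
  proof -
    have "Q - ?p = - ((1 + s) *\<^sub>R (P - Q))" by (simp add: algebra_simps)
    thus ?thesis using s unfolding dist_norm by (simp only: norm_minus_cancel) simp
  qed
  moreover have "dist P ?p = s * norm (P - Q)" "dist Q ?q = t * norm (P - Q)"
    using s t unfolding dist_norm by (simp_all add: norm_minus_commute)
  ultimately have "hilbert_dist \<Omega> y z = 1/2 * ln (((1 + t) * norm (P - Q)) * ((1 + s) * norm (P - Q))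
      / ((s * norm (P - Q)) * (t * norm (P - Q))))" by simp
  also have "((1 + t) * norm (P - Q)) * ((1 + s) * norm (P - Q)) / ((s * norm (P - Q)) * (t * norm (P - Q)))
      = (1 + s) / s * ((1 + t) / t)"
    using n s t by (simp add: field_simps)
  finally show "hilbert_dist \<Omega> y z = ln ((1 + s) / s * ((1 + t) / t)) / 2" by simp
qed

lemma ratio_le_iff: "(s::real) \<ge> 0 \<Longrightarrow> c < 1 \<Longrightarrow> s / (1 + s) \<le> c \<longleftrightarrow> s \<le> c / (1 - c)"
  and ratio_less_iff: "(s::real) \<ge> 0 \<Longrightarrow> c < 1 \<Longrightarrow> s / (1 + s) < c \<longleftrightarrow> s < c / (1 - c)"
  by (auto simp: field_simps)

lemma Sup_ratio_ge:
  fixes X :: "real set"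
  assumes bdd: "bdd_above X" and ne: "X \<noteq> {}" and S: "Sup X > 0" and c: "c > 0"
    and le: "\<And>s. s \<in> X \<Longrightarrow> s \<ge> 0 \<and> s / (1 + s) \<le> c"
  shows "1 / c \<le> (1 + Sup X) / Sup X"
proof -
  have eq: "(1 + Sup X) / Sup X = 1 + 1 / Sup X" using S by (simp add: field_simps)
  show ?thesis
  proof (cases "c < 1")
    case True
    have "Sup X \<le> c / (1 - c)" using ne le ratio_le_iff[OF _ True] by (intro cSup_least) auto
    hence "(1 - c) / c \<le> 1 / Sup X" using S c True by (simp add: field_simps)
    thus ?thesis unfolding eq using c by (simp add: field_simps)
  next
    case False
    hence "1 / c \<le> 1" by simp
    moreover have "0 < 1 / Sup X" using S by simp
    ultimately show ?thesis unfolding eq by linarith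
  qed
qed

lemma Sup_ratio_le:
  fixes X :: "real set"
  assumes bdd: "bdd_above X" and X0: "0 \<in> X" and c: "c > 0"
    and mem: "\<And>s. s \<ge> 0 \<Longrightarrow> s / (1 + s) < c \<Longrightarrow> s \<in> X"
  shows "(1 + Sup X) / Sup X \<le> 1 / c"
proof -
  obtain B where B: "\<And>s. s \<in> X \<Longrightarrow> s \<le> B" using bdd by (auto simp: bdd_above_def)
  have c1: "c < 1"
  proof (rule ccontr)
    assume "\<not> c < 1"
    define s where "s = max B 0 + 1"
    have s0: "s \<ge> 0" and "s / (1 + s) < 1" unfolding s_def by auto
    hence "s / (1 + s) < c" using \<open>\<not> c < 1\<close> by linarith
    hence "s \<in> X" by (rule mem[OF s0])
    thus False using B unfolding s_def by fastforce
  qed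
  have "c / (1 - c) \<le> Sup X"
  proof (rule dense_le_bounded[of 0])
    show "0 < c / (1 - c)" using c c1 by simp
    fix s assume "0 < s" "s < c / (1 - c)"
    hence "s \<in> X" using mem ratio_less_iff[OF _ c1] by auto
    thus "s \<le> Sup X" using bdd by (rule cSup_upper)
  qed
  moreover have cpos: "c / (1 - c) > 0" using c c1 by simp
  ultimately have S: "Sup X > 0" by linarith
  have "1 / Sup X \<le> 1 / (c / (1 - c))"
    using divide_left_mono[OF \<open>c / (1 - c) \<le> Sup X\<close>, of 1] mult_pos_pos[OF S cpos] by simp
  moreover have "(1 + Sup X) / Sup X = 1 + 1 / Sup X" using S by (simp add: field_simps)
  moreover have "1 + 1 / (c / (1 - c)) = 1 / c" using c c1 by (simp add: field_simps)
  ultimately show ?thesis by linarith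
qed

lemma exit_params_iff:
  fixes y z :: "real^'n"
  assumes pc: "pcone \<Omega>" and ay: "a \<bullet> y > 0" and az: "a \<bullet> z > 0" and s: "s \<ge> 0"
  defines "u \<equiv> y - (s / (1 + s) * (a \<bullet> y) / (a \<bullet> z)) *\<^sub>R z"
  shows "0 < a \<bullet> u"
    and "s \<in> exit_params \<Omega> a (chart_point a y) (chart_point a z) \<longleftrightarrow> u \<in> \<Omega>"
proof -
  define k where "k = (1 + s) / (a \<bullet> y)"
  have k: "k > 0" using ay s unfolding k_def by simp
  have "k * (s / (1 + s) * (a \<bullet> y) / (a \<bullet> z)) = s / (a \<bullet> z)" using ay s unfolding k_def by simp
  hence "k *\<^sub>R u = k *\<^sub>R y - (s / (a \<bullet> z)) *\<^sub>R z"
    unfolding u_def by (simp only: scaleR_right_diff_distrib scaleR_scaleR)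
  hence eq: "chart_point a y + s *\<^sub>R (chart_point a y - chart_point a z) = k *\<^sub>R u"
    unfolding k_def chart_point_def by (simp add: algebra_simps add_divide_distrib scaleR_add_left)
  have a1: "a \<bullet> (k *\<^sub>R u) = 1"
    unfolding eq[symmetric] using ay az by (simp add: chart_point_def inner_add_right inner_diff_right)
  thus "0 < a \<bullet> u" using k by (metis inner_scaleR_right zero_less_mult_pos zero_less_one)
  have "k *\<^sub>R u \<in> \<Omega> \<longleftrightarrow> u \<in> \<Omega>"
    using pcone_scaleR[OF pc, of u k] pcone_scaleR[OF pc, of "k *\<^sub>R u" "inverse k"] k by auto
  with a1 show "s \<in> exit_params \<Omega> a (chart_point a y) (chart_point a z) \<longleftrightarrow> u \<in> \<Omega>"
    unfolding exit_params_def mem_Collect_eq eq using s by blast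
qed

lemma exit_time_ge:
  assumes pc: "pcone \<Omega>" and gc: "good_chart \<Omega> a" and op: "open \<Omega>"
    and y: "y \<in> half_cone \<Omega> a" and z: "z \<in> half_cone \<Omega> a"
    and PQ: "chart_point a y \<noteq> chart_point a z"
    and c: "c > 0" and bound: "\<And>r. r > 0 \<Longrightarrow> y - r *\<^sub>R z \<in> half_cone \<Omega> a \<Longrightarrow> r \<le> c"
  defines "P \<equiv> chart_point a y" and "Q \<equiv> chart_point a z"
  shows "(a \<bullet> y) / (c * (a \<bullet> z)) \<le> (1 + exit_time \<Omega> a P Q) / exit_time \<Omega> a P Q"
proof -
  have ay: "a \<bullet> y > 0" and az: "a \<bullet> z > 0" using y z unfolding half_cone_def by auto
  note X = exit_time_pos[OF gc op chart_point_in_chart[OF pc y] chart_point_in_chart(2)[OF pc z] PQ,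
      folded P_def Q_def]
  have "1 / (c * (a \<bullet> z) / (a \<bullet> y)) \<le> (1 + exit_time \<Omega> a P Q) / exit_time \<Omega> a P Q"
    unfolding exit_time_def
  proof (rule Sup_ratio_ge)
    show "bdd_above (exit_params \<Omega> a P Q)" "exit_params \<Omega> a P Q \<noteq> {}"
      "0 < Sup (exit_params \<Omega> a P Q)"
      using X unfolding exit_time_def by auto
    show "c * (a \<bullet> z) / (a \<bullet> y) > 0" using c ay az by simp
    fix s assume sX: "s \<in> exit_params \<Omega> a P Q"
    have s0: "s \<ge> 0" using sX by (rule exit_params_nonneg)
    define \<rho> where "\<rho> = s / (1 + s)"
    have "\<rho> \<le> c * (a \<bullet> z) / (a \<bullet> y)"
    proof (cases "s = 0")
      case False
      hence r0: "\<rho> * (a \<bullet> y) / (a \<bullet> z) > 0" using s0 ay az unfolding \<rho>_def by simp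
      have "y - (\<rho> * (a \<bullet> y) / (a \<bullet> z)) *\<^sub>R z \<in> half_cone \<Omega> a"
        using sX exit_params_iff[OF pc ay az s0] unfolding \<rho>_def P_def Q_def half_cone_def by simp
      hence "\<rho> * (a \<bullet> y) / (a \<bullet> z) \<le> c" by (rule bound[OF r0])
      thus ?thesis using ay az by (simp add: field_simps)
    qed (use c ay az \<rho>_def in simp)
    thus "s \<ge> 0 \<and> s / (1 + s) \<le> c * (a \<bullet> z) / (a \<bullet> y)" using s0 unfolding \<rho>_def by simp
  qed
  thus ?thesis by simp
qed

lemma exit_time_le:
  assumes pc: "pcone \<Omega>" and gc: "good_chart \<Omega> a" and op: "open \<Omega>"
    and y: "y \<in> half_cone \<Omega> a" and z: "z \<in> half_cone \<Omega> a"
    and PQ: "chart_point a y \<noteq> chart_point a z"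
    and c: "c > 0" and inside: "\<And>r. 0 \<le> r \<Longrightarrow> r < c \<Longrightarrow> y - r *\<^sub>R z \<in> \<Omega>"
  defines "P \<equiv> chart_point a y" and "Q \<equiv> chart_point a z"
  shows "(1 + exit_time \<Omega> a P Q) / exit_time \<Omega> a P Q \<le> (a \<bullet> y) / (c * (a \<bullet> z))"
proof -
  have ay: "a \<bullet> y > 0" and az: "a \<bullet> z > 0" using y z unfolding half_cone_def by auto
  note X = exit_time_pos[OF gc op chart_point_in_chart[OF pc y] chart_point_in_chart(2)[OF pc z] PQ,
      folded P_def Q_def]
  have "(1 + exit_time \<Omega> a P Q) / exit_time \<Omega> a P Q \<le> 1 / (c * (a \<bullet> z) / (a \<bullet> y))"
    unfolding exit_time_def
  proof (rule Sup_ratio_le)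
    show "bdd_above (exit_params \<Omega> a P Q)" "0 \<in> exit_params \<Omega> a P Q" using X by auto
    show "c * (a \<bullet> z) / (a \<bullet> y) > 0" using c ay az by simp
    fix s :: real assume s0: "s \<ge> 0" and lt: "s / (1 + s) < c * (a \<bullet> z) / (a \<bullet> y)"
    define \<rho> where "\<rho> = s / (1 + s)"
    have "\<rho> * (a \<bullet> y) / (a \<bullet> z) < c" using lt ay az unfolding \<rho>_def[symmetric] by (simp add: field_simps)
    moreover have "\<rho> * (a \<bullet> y) / (a \<bullet> z) \<ge> 0" using s0 ay az unfolding \<rho>_def by simp
    ultimately have "y - (\<rho> * (a \<bullet> y) / (a \<bullet> z)) *\<^sub>R z \<in> \<Omega>" by (intro inside)
    thus "s \<in> exit_params \<Omega> a P Q"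
      using exit_params_iff[OF pc ay az s0] unfolding P_def Q_def \<rho>_def by simp
  qed
  thus ?thesis by simp
qed

lemma hilbert_dist_ge:
  assumes pcd: "properly_convex_domain \<Omega>"
    and y: "y \<in> half_cone \<Omega> (chart \<Omega>)" and z: "z \<in> half_cone \<Omega> (chart \<Omega>)"
    and c1: "c1 > 0" and c2: "c2 > 0"
    and bound1: "\<And>r. r > 0 \<Longrightarrow> y - r *\<^sub>R z \<in> half_cone \<Omega> (chart \<Omega>) \<Longrightarrow> r \<le> c1"
    and bound2: "\<And>r. r > 0 \<Longrightarrow> z - r *\<^sub>R y \<in> half_cone \<Omega> (chart \<Omega>) \<Longrightarrow> r \<le> c2"
  shows "- ln (c1 * c2) / 2 \<le> hilbert_dist \<Omega> y z"
proof -
  let ?a = "chart \<Omega>"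
  note \<Omega> = properly_convex_domainD[OF pcd]
  have ay: "?a \<bullet> y > 0" and az: "?a \<bullet> z > 0" using y z unfolding half_cone_def by auto
  show ?thesis
  proof (cases "chart_point ?a y = chart_point ?a z")
    case True
    define \<mu> where "\<mu> = (?a \<bullet> z) / (?a \<bullet> y)"
    have \<mu>: "\<mu> > 0" using ay az unfolding \<mu>_def by simp
    have zy: "z = \<mu> *\<^sub>R y" using half_cone_chart_point_eq[OF y True] unfolding \<mu>_def .
    have "1 / \<mu> \<le> c1"
    proof (rule dense_le_bounded[of 0])
      fix r assume "0 < r" "r < 1 / \<mu>"
      moreover from this have "y - r *\<^sub>R z = (1 - r * \<mu>) *\<^sub>R y" "1 - r * \<mu> > 0"
        using \<mu> by (simp_all add: zy algebra_simps field_simps)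
      ultimately show "r \<le> c1" using bound1 half_cone_scaleR[OF \<Omega>(1) y] by simp
    qed (use \<mu> in simp)
    moreover have "\<mu> \<le> c2"
    proof (rule dense_le_bounded[of 0])
      fix r assume "0 < r" "r < \<mu>"
      moreover from this have "z - r *\<^sub>R y = (\<mu> - r) *\<^sub>R y" by (simp add: zy algebra_simps)
      ultimately show "r \<le> c2" using bound2 half_cone_scaleR[OF \<Omega>(1) y] by simp
    qed (use \<mu> in simp)
    ultimately have "1 / \<mu> * \<mu> \<le> c1 * c2" using \<mu> c1 by (intro mult_mono) auto
    hence "0 \<le> ln (c1 * c2)" using \<mu> c1 c2 by simp
    thus ?thesis using hilbert_dist_same_chart_point[OF True] by simp
  next
    case False
    note st = hilbert_dist_exit_times[OF pcd y z False]
    let ?s = "exit_time \<Omega> ?a (chart_point ?a y) (chart_point ?a z)"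
      and ?t = "exit_time \<Omega> ?a (chart_point ?a z) (chart_point ?a y)"
    have "(?a \<bullet> y) / (c1 * (?a \<bullet> z)) \<le> (1 + ?s) / ?s"
      by (rule exit_time_ge[OF \<Omega>(1,4,2) y z False c1 bound1])
    moreover have "(?a \<bullet> z) / (c2 * (?a \<bullet> y)) \<le> (1 + ?t) / ?t"
      by (rule exit_time_ge[OF \<Omega>(1,4,2) z y False[symmetric] c2 bound2])
    ultimately have "(?a \<bullet> y) / (c1 * (?a \<bullet> z)) * ((?a \<bullet> z) / (c2 * (?a \<bullet> y)))
        \<le> (1 + ?s) / ?s * ((1 + ?t) / ?t)"
      using ay az c1 c2 st(1) by (intro mult_mono) auto
    also have "(?a \<bullet> y) / (c1 * (?a \<bullet> z)) * ((?a \<bullet> z) / (c2 * (?a \<bullet> y))) = 1 / (c1 * c2)"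
      using ay az by simp
    finally have "ln (1 / (c1 * c2)) \<le> ln ((1 + ?s) / ?s * ((1 + ?t) / ?t))"
      using c1 c2 by (intro ln_mono) auto
    thus ?thesis using st(3) c1 c2 by (simp add: ln_div)
  qed
qed

lemma hilbert_dist_le:
  assumes pcd: "properly_convex_domain \<Omega>"
    and y: "y \<in> half_cone \<Omega> (chart \<Omega>)" and z: "z \<in> half_cone \<Omega> (chart \<Omega>)"
    and c1: "c1 > 0" and c2: "c2 > 0"
    and inside1: "\<And>r. 0 \<le> r \<Longrightarrow> r < c1 \<Longrightarrow> y - r *\<^sub>R z \<in> \<Omega>"
    and inside2: "\<And>r. 0 \<le> r \<Longrightarrow> r < c2 \<Longrightarrow> z - r *\<^sub>R y \<in> \<Omega>"
  shows "hilbert_dist \<Omega> y z \<le> - ln (c1 * c2) / 2"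
proof -
  let ?a = "chart \<Omega>"
  note \<Omega> = properly_convex_domainD[OF pcd]
  have ay: "?a \<bullet> y > 0" and az: "?a \<bullet> z > 0" using y z unfolding half_cone_def by auto
  show ?thesis
  proof (cases "chart_point ?a y = chart_point ?a z")
    case True
    define \<mu> where "\<mu> = (?a \<bullet> z) / (?a \<bullet> y)"
    have \<mu>: "\<mu> > 0" using ay az unfolding \<mu>_def by simp
    have zy: "z = \<mu> *\<^sub>R y" using half_cone_chart_point_eq[OF y True] unfolding \<mu>_def .
    have "0 \<notin> \<Omega>" using \<Omega>(1) unfolding pcone_def by blast
    hence "\<not> 1 / \<mu> < c1" and "\<not> \<mu> < c2"
      using inside1[of "1 / \<mu>"] inside2[of \<mu>] \<mu> by (auto simp: zy)
    hence "c1 * c2 \<le> 1 / \<mu> * \<mu>" using c1 c2 \<mu> by (intro mult_mono) auto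
    hence "ln (c1 * c2) \<le> 0" using \<mu> c1 c2 by simp
    thus ?thesis using hilbert_dist_same_chart_point[OF True] by simp
  next
    case False
    note st = hilbert_dist_exit_times[OF pcd y z False]
    let ?s = "exit_time \<Omega> ?a (chart_point ?a y) (chart_point ?a z)"
      and ?t = "exit_time \<Omega> ?a (chart_point ?a z) (chart_point ?a y)"
    have "(1 + ?s) / ?s \<le> (?a \<bullet> y) / (c1 * (?a \<bullet> z))"
      by (rule exit_time_le[OF \<Omega>(1,4,2) y z False c1 inside1])
    moreover have "(1 + ?t) / ?t \<le> (?a \<bullet> z) / (c2 * (?a \<bullet> y))"
      by (rule exit_time_le[OF \<Omega>(1,4,2) z y False[symmetric] c2 inside2])
    ultimately have "(1 + ?s) / ?s * ((1 + ?t) / ?t)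
        \<le> (?a \<bullet> y) / (c1 * (?a \<bullet> z)) * ((?a \<bullet> z) / (c2 * (?a \<bullet> y)))"
      using ay az c1 c2 st(1,2) by (intro mult_mono) auto
    also have "(?a \<bullet> y) / (c1 * (?a \<bullet> z)) * ((?a \<bullet> z) / (c2 * (?a \<bullet> y))) = 1 / (c1 * c2)"
      using ay az by simp
    finally have "ln ((1 + ?s) / ?s * ((1 + ?t) / ?t)) \<le> ln (1 / (c1 * c2))"
      using st(1,2) by (intro ln_mono) auto
    thus ?thesis using st(3) c1 c2 by (simp add: ln_div)
  qed
qed

section \<open>Linear maps preserving the half cone\<close>

text \<open>Iterating x \<mapsto> (y - r T y) + r T x, which preserves the half cone, moves y - \<epsilon> v to
  y - (r \<mu>)^n \<epsilon> v; for r \<mu> > 1 this eventually leaves the half cone.\<close>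
lemma half_cone_eigenvalue_le:
  fixes T :: "real^'n \<Rightarrow> real^'n"
  assumes pc: "pcone \<Omega>" and gc: "good_chart \<Omega> a" and op: "open \<Omega>"
    and lin: "linear T" and T: "T ` half_cone \<Omega> a \<subseteq> half_cone \<Omega> a"
    and ev: "T v = \<mu> *\<^sub>R v" and av: "a \<bullet> v > 0"
    and y: "y \<in> half_cone \<Omega> a" and r: "r > 0" and yr: "y - r *\<^sub>R T y \<in> half_cone \<Omega> a"
  shows "r * \<mu> \<le> 1"
proof (rule ccontr)
  assume "\<not> r * \<mu> \<le> 1"
  hence r\<mu>: "r * \<mu> > 1" by simp
  obtain \<epsilon> where \<epsilon>: "\<epsilon> > 0" "y - \<epsilon> *\<^sub>R v \<in> half_cone \<Omega> a" using half_cone_perturb[OF op y] .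
  have orbit: "y - ((r * \<mu>) ^ n * \<epsilon>) *\<^sub>R v \<in> half_cone \<Omega> a" for n
  proof (induction n)
    case 0
    then show ?case using \<epsilon> by simp
  next
    case (Suc n)
    define K where "K = (r * \<mu>) ^ n * \<epsilon>"
    have "T (y - K *\<^sub>R v) \<in> half_cone \<Omega> a" using T Suc unfolding K_def by blast
    hence "r *\<^sub>R T (y - K *\<^sub>R v) \<in> half_cone \<Omega> a" using half_cone_scaleR[OF pc _ r] by blast
    from half_cone_add[OF pc gc yr this]
    have "(y - r *\<^sub>R T y) + r *\<^sub>R T (y - K *\<^sub>R v) \<in> half_cone \<Omega> a" .
    moreover have "(y - r *\<^sub>R T y) + r *\<^sub>R T (y - K *\<^sub>R v) = y - ((r * \<mu>) ^ Suc n * \<epsilon>) *\<^sub>R v"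
      using lin ev unfolding K_def by (simp add: linear_diff linear_cmul algebra_simps)
    ultimately show ?case by simp
  qed
  obtain n where n: "(a \<bullet> y) / (\<epsilon> * (a \<bullet> v)) < (r * \<mu>) ^ n" using real_arch_pow[OF r\<mu>] by blast
  have "(r * \<mu>) ^ n * \<epsilon> * (a \<bullet> v) < a \<bullet> y"
    using orbit[of n] unfolding half_cone_def by (simp add: inner_diff_right)
  with n \<epsilon>(1) av show False by (simp add: field_simps)
qed

lemma half_cone_inverse:
  assumes pc: "pcone \<Omega>" and gc: "good_chart \<Omega> a"
    and lin: "linear T" and T: "T ` half_cone \<Omega> a \<subseteq> half_cone \<Omega> a"
    and inv: "\<And>x. T (Ti x) = x" and Ti: "Ti ` \<Omega> \<subseteq> \<Omega>"
  shows "Ti ` half_cone \<Omega> a \<subseteq> half_cone \<Omega> a"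
proof (rule image_subsetI)
  fix x assume x: "x \<in> half_cone \<Omega> a"
  hence "Ti x \<in> \<Omega>" using Ti unfolding half_cone_def by blast
  show "Ti x \<in> half_cone \<Omega> a"
  proof (rule ccontr)
    assume "Ti x \<notin> half_cone \<Omega> a"
    hence "- Ti x \<in> half_cone \<Omega> a" using half_cone_or_uminus[OF pc gc \<open>Ti x \<in> \<Omega>\<close>] by blast
    hence "T (- Ti x) \<in> half_cone \<Omega> a" using T by blast
    hence "- x \<in> half_cone \<Omega> a" using inv lin by (simp add: linear_neg)
    with x show False unfolding half_cone_def by simp
  qed
qed

text \<open>Since the half cone is convex and f maps no point of \<Omega> to the hyperplane a \<bullet> x = 0,
  the sign of a \<bullet> f x is constant on the half cone.\<close>
lemma half_cone_sign:
  assumes pc: "pcone \<Omega>" and gc: "good_chart \<Omega> a" and ne: "\<Omega> \<noteq> {}"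
    and lin: "linear f" and f: "\<And>x. x \<in> \<Omega> \<Longrightarrow> f x \<in> \<Omega>"
  obtains \<delta> :: real where "\<bar>\<delta>\<bar> = 1" "(\<lambda>x. \<delta> *\<^sub>R f x) ` half_cone \<Omega> a \<subseteq> half_cone \<Omega> a"
proof -
  obtain x0 where x0: "x0 \<in> half_cone \<Omega> a"
    using ne half_cone_or_uminus[OF pc gc] by blast
  have nz: "a \<bullet> f x \<noteq> 0" if "x \<in> half_cone \<Omega> a" for x
    using good_chart_inner_nonzero[OF gc f] that unfolding half_cone_def by blast
  define \<delta> where "\<delta> = sgn (a \<bullet> f x0)"
  have \<delta>: "\<bar>\<delta>\<bar> = 1" using nz[OF x0] unfolding \<delta>_def by (simp add: abs_sgn)
  have "\<delta> * (a \<bullet> f x) > 0" if x: "x \<in> half_cone \<Omega> a" for x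
  proof (rule ccontr)
    assume "\<not> \<delta> * (a \<bullet> f x) > 0"
    moreover have "\<delta> * (a \<bullet> f x) \<noteq> 0" using nz[OF x] \<delta> by auto
    ultimately have neg: "\<delta> * (a \<bullet> f x) < 0" by linarith
    define p q where "p = - (\<delta> * (a \<bullet> f x))" and "q = \<delta> * (a \<bullet> f x0)"
    have "q > 0" using nz[OF x0] unfolding q_def \<delta>_def by (cases "a \<bullet> f x0 > 0") auto
    hence "p *\<^sub>R x0 + q *\<^sub>R x \<in> half_cone \<Omega> a"
      using neg unfolding p_def by (intro half_cone_add[OF pc gc] half_cone_scaleR[OF pc] x0 x) auto
    hence "a \<bullet> f (p *\<^sub>R x0 + q *\<^sub>R x) \<noteq> 0" by (rule nz)
    moreover have "a \<bullet> f (p *\<^sub>R x0 + q *\<^sub>R x) = p * (a \<bullet> f x0) + q * (a \<bullet> f x)"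
      using lin by (simp add: linear_add linear_cmul inner_add_right)
    moreover have "p * (a \<bullet> f x0) + q * (a \<bullet> f x) = 0" unfolding p_def q_def by (simp add: algebra_simps)
    ultimately show False by simp
  qed
  hence "(\<lambda>x. \<delta> *\<^sub>R f x) ` half_cone \<Omega> a \<subseteq> half_cone \<Omega> a"
    using pcone_scaleR[OF pc f] \<delta> unfolding half_cone_def by auto
  with \<delta> show ?thesis by (rule that)
qed

lemma half_cone_eigenvalue_pos:
  assumes lin: "linear T" and T: "T ` half_cone \<Omega> a \<subseteq> half_cone \<Omega> a"
    and inj: "inj T" and ev: "T v = l *\<^sub>R v" and av: "a \<bullet> v > 0"
    and vw: "\<And>\<epsilon>. \<epsilon> > 0 \<Longrightarrow> v + \<epsilon> *\<^sub>R w \<in> \<Omega>"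
  shows "l > 0"
proof -
  have "l \<noteq> 0"
  proof
    assume "l = 0"
    hence "T v = T 0" using ev lin by (simp add: linear_0)
    hence "v = 0" by (rule injD[OF inj])
    with av show False by simp
  qed
  have "((\<lambda>\<epsilon>. a \<bullet> (v + \<epsilon> *\<^sub>R w)) \<longlongrightarrow> a \<bullet> v) (at_right 0)"
    by (intro tendsto_eq_intros) auto
  hence "eventually (\<lambda>\<epsilon>. a \<bullet> (v + \<epsilon> *\<^sub>R w) > 0) (at_right 0)"
    using av by (rule order_tendstoD)
  moreover have "eventually (\<lambda>\<epsilon>. \<epsilon> > 0) (at_right (0::real))" by (rule eventually_at_right_less)
  ultimately have "eventually (\<lambda>\<epsilon>. 0 \<le> l * (a \<bullet> v) + \<epsilon> * (a \<bullet> T w)) (at_right 0)"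
  proof eventually_elim
    case (elim \<epsilon>)
    hence "T (v + \<epsilon> *\<^sub>R w) \<in> half_cone \<Omega> a" using T vw unfolding half_cone_def by blast
    thus ?case using lin ev unfolding half_cone_def by (simp add: linear_add linear_cmul inner_add_right)
  qed
  moreover have "((\<lambda>\<epsilon>. l * (a \<bullet> v) + \<epsilon> * (a \<bullet> T w)) \<longlongrightarrow> l * (a \<bullet> v)) (at_right 0)"
    by (intro tendsto_eq_intros) auto
  ultimately have "0 \<le> l * (a \<bullet> v)" by (intro tendsto_lowerbound) auto
  with \<open>l \<noteq> 0\<close> av show ?thesis by (simp add: zero_le_mult_iff)
qed

lemma hilbert_dist_ge_eigenvalue_ratio:
  fixes T Ti :: "real^'n \<Rightarrow> real^'n"
  assumes pcd: "properly_convex_domain \<Omega>"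
    and lin: "linear T" "linear Ti" and inv: "\<And>x. Ti (T x) = x"
    and T_hc: "T ` half_cone \<Omega> (chart \<Omega>) \<subseteq> half_cone \<Omega> (chart \<Omega>)"
    and Ti_hc: "Ti ` half_cone \<Omega> (chart \<Omega>) \<subseteq> half_cone \<Omega> (chart \<Omega>)"
    and vM: "T vM = M *\<^sub>R vM" "chart \<Omega> \<bullet> vM > 0" and vm: "T vm = m *\<^sub>R vm" "chart \<Omega> \<bullet> vm > 0"
    and M: "M > 0" and m: "m > 0" and y: "y \<in> \<Omega>"
  shows "ln (M / m) / 2 \<le> hilbert_dist \<Omega> y (T y)"
proof -
  note \<Omega> = properly_convex_domainD[OF pcd]
  have "vm = m *\<^sub>R Ti vm" using inv[of vm] vm(1) lin(2) by (simp add: linear_cmul)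
  hence "(1 / m) *\<^sub>R vm = (1 / m) *\<^sub>R (m *\<^sub>R Ti vm)" by (rule arg_cong)
  hence Ti_vm: "Ti vm = (1 / m) *\<^sub>R vm" using m by simp
  have hc_bound: "- ln (1 / M * m) / 2 \<le> hilbert_dist \<Omega> y (T y)"
    if y: "y \<in> half_cone \<Omega> (chart \<Omega>)" for y
  proof (rule hilbert_dist_ge[OF pcd y])
    show "T y \<in> half_cone \<Omega> (chart \<Omega>)" using T_hc y by blast
  next
    fix r assume r: "r > 0" "y - r *\<^sub>R T y \<in> half_cone \<Omega> (chart \<Omega>)"
    have "r * M \<le> 1" by (rule half_cone_eigenvalue_le[OF \<Omega>(1,4,2) lin(1) T_hc vM y r])
    thus "r \<le> 1 / M" using M by (simp add: field_simps)
  next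
    fix r assume r: "r > 0" "T y - r *\<^sub>R y \<in> half_cone \<Omega> (chart \<Omega>)"
    have "Ti (T y - r *\<^sub>R y) = y - r *\<^sub>R Ti y" using lin(2) inv by (simp add: linear_diff linear_cmul)
    moreover have "Ti (T y - r *\<^sub>R y) \<in> half_cone \<Omega> (chart \<Omega>)" using Ti_hc r(2) by blast
    ultimately have "y - r *\<^sub>R Ti y \<in> half_cone \<Omega> (chart \<Omega>)" by simp
    from half_cone_eigenvalue_le[where T = Ti, OF \<Omega>(1,4,2) lin(2) Ti_hc Ti_vm vm(2) y r(1) this]
    have "r * (1 / m) \<le> 1" .
    thus "r \<le> m" using m by (simp add: field_simps)
  qed (use M m in simp_all)
  have neg: "hilbert_dist \<Omega> (- y) (T (- y)) = hilbert_dist \<Omega> y (T y)"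
    using lin(1) by (simp add: linear_neg hilbert_dist_uminus)
  have "- ln (1 / M * m) / 2 = ln (M / m) / 2" using M m by (simp add: ln_div ln_mult)
  with half_cone_or_uminus[OF \<Omega>(1,4) y] hc_bound[of y] hc_bound[of "- y"] neg show ?thesis
    by auto
qed

lemma invertible_matrix_inv:
  fixes A :: "real^'n^'n"
  assumes "invertible A"
  shows "A ** matrix_inv A = mat 1" "matrix_inv A ** A = mat 1"
proof -
  have "\<exists>A'. A ** A' = mat 1 \<and> A' ** A = mat 1" using assms unfolding invertible_def by blast
  hence "A ** matrix_inv A = mat 1 \<and> matrix_inv A ** A = mat 1"
    unfolding matrix_inv_def by (rule someI_ex)
  thus "A ** matrix_inv A = mat 1" "matrix_inv A ** A = mat 1" by auto
qed

lemma automorphism_half_cone_normalized: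
  assumes pcd: "properly_convex_domain \<Omega>" and g: "is_automorphism \<Omega> g"
  obtains \<delta> :: real and T Ti :: "real^'n \<Rightarrow> real^'n"
  where "\<delta> \<noteq> 0" "T = (\<lambda>x. \<delta> *\<^sub>R (g *v x))"
    "linear T" "linear Ti" "\<And>x. Ti (T x) = x"
    "T ` half_cone \<Omega> (chart \<Omega>) \<subseteq> half_cone \<Omega> (chart \<Omega>)"
    "Ti ` half_cone \<Omega> (chart \<Omega>) \<subseteq> half_cone \<Omega> (chart \<Omega>)"
proof -
  note \<Omega> = properly_convex_domainD[OF pcd]
  have inv: "g ** matrix_inv g = mat 1" "matrix_inv g ** g = mat 1" and gO: "(\<lambda>x. g *v x) ` \<Omega> = \<Omega>"
    using g invertible_matrix_inv unfolding is_automorphism_def by auto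
  have g_O: "g *v x \<in> \<Omega>" if "x \<in> \<Omega>" for x using imageI[OF that, of "\<lambda>x. g *v x"] unfolding gO .
  have gi_O: "matrix_inv g *v x \<in> \<Omega>" if "x \<in> \<Omega>" for x
  proof -
    have "x \<in> (\<lambda>x. g *v x) ` \<Omega>" using that by (simp only: gO)
    then obtain z where "z \<in> \<Omega>" "x = g *v z" by (rule imageE)
    thus ?thesis using inv by (simp add: matrix_vector_mul_assoc)
  qed
  obtain \<delta> where \<delta>: "\<bar>\<delta>\<bar> = 1"
    "(\<lambda>x. \<delta> *\<^sub>R (g *v x)) ` half_cone \<Omega> (chart \<Omega>) \<subseteq> half_cone \<Omega> (chart \<Omega>)"
    using half_cone_sign[OF \<Omega>(1,4,3) matrix_vector_mul_linear g_O] by blast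
  define T Ti where "T = (\<lambda>x. \<delta> *\<^sub>R (g *v x))" and "Ti = (\<lambda>x. \<delta> *\<^sub>R (matrix_inv g *v x))"
  have lin: "linear T" "linear Ti" unfolding T_def Ti_def
    by (rule linearI; simp add: matrix_vector_right_distrib matrix_vector_mult_scaleR algebra_simps)+
  have "\<delta> * \<delta> = 1" using \<delta>(1) by (metis abs_mult_self_eq mult_1_left)
  hence "Ti (T x) = x" "T (Ti x) = x" for x
    using inv unfolding T_def Ti_def by (simp_all add: matrix_vector_mult_scaleR matrix_vector_mul_assoc)
  moreover have "Ti ` half_cone \<Omega> (chart \<Omega>) \<subseteq> half_cone \<Omega> (chart \<Omega>)"
  proof (rule half_cone_inverse[OF \<Omega>(1,4) lin(1) \<delta>(2)[folded T_def]])
    show "T (Ti x) = x" for x by fact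
    show "Ti ` \<Omega> \<subseteq> \<Omega>" using pcone_scaleR[OF \<Omega>(1) gi_O] \<delta>(1) unfolding Ti_def by auto
  qed
  moreover have "\<delta> \<noteq> 0" using \<delta>(1) by auto
  ultimately show ?thesis using that[OF _ T_def lin] \<delta>(2)[folded T_def] by blast
qed

section \<open>Simplices with eigenvector vertices\<close>

lemma matrix_vector_mult_columns:
  fixes B :: "real^'n^'m"
  shows "B *v y = (\<Sum>i\<in>UNIV. y $ i *\<^sub>R (B *v axis i 1))"
  by (simp only: matrix_mult_sum[of B y] matrix_vector_mult_basis scalar_mult_eq_scaleR)

lemma linear_eigen_columns:
  fixes B :: "real^'n^'n" and T :: "real^'n \<Rightarrow> real^'n"
  assumes lin: "linear T" and ev: "\<forall>j\<in>I. T (B *v axis j 1) = lam j *\<^sub>R (B *v axis j 1)"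
    and y: "\<forall>j. j \<notin> I \<longrightarrow> y $ j = 0"
  shows "T (B *v y) = B *v (\<chi> j. lam j * y $ j)"
proof -
  have "T (B *v y) = (\<Sum>i\<in>UNIV. y $ i *\<^sub>R T (B *v axis i 1))"
    using lin by (simp add: matrix_vector_mult_columns[of B y] linear_sum linear_cmul)
  also have "\<dots> = (\<Sum>i\<in>UNIV. (lam i * y $ i) *\<^sub>R (B *v axis i 1))"
  proof (rule sum.cong[OF refl])
    fix i show "y $ i *\<^sub>R T (B *v axis i 1) = (lam i * y $ i) *\<^sub>R (B *v axis i 1)"
      using ev y by (cases "i \<in> I") (auto simp: mult.commute)
  qed
  also have "\<dots> = B *v (\<chi> j. lam j * y $ j)"
    by (simp add: matrix_vector_mult_columns[of B "\<chi> j. lam j * y $ j"])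
  finally show ?thesis .
qed

lemma simplex_ofI:
  "c \<noteq> 0 \<Longrightarrow> \<forall>i\<in>I. y $ i > 0 \<Longrightarrow> \<forall>i. i \<notin> I \<longrightarrow> y $ i = 0
    \<Longrightarrow> c *\<^sub>R (matrix_inv h *v y) \<in> simplex_of h I"
  unfolding simplex_of_def by blast

lemma simplex_of_scaleR: "x \<in> simplex_of h I \<Longrightarrow> c \<noteq> 0 \<Longrightarrow> c *\<^sub>R x \<in> simplex_of h I"
  unfolding simplex_of_def by auto (metis mult_eq_0_iff)

text \<open>The vertices being eigenvectors, T acts diagonally in the simplex coordinates, so a
  combination p x + q T x only rescales the positive coordinates of x.\<close>
lemma simplex_of_eigen_combination:
  assumes lin: "linear T"
    and ev: "\<forall>j\<in>I. T (matrix_inv h *v axis j 1) = lam j *\<^sub>R (matrix_inv h *v axis j 1)"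
    and x: "x \<in> simplex_of h I" and pos: "\<forall>j\<in>I. p + q * lam j > 0"
  shows "p *\<^sub>R x + q *\<^sub>R T x \<in> simplex_of h I"
proof -
  obtain c y where c: "c \<noteq> 0" and y: "\<forall>i\<in>I. y $ i > 0" "\<forall>i. i \<notin> I \<longrightarrow> y $ i = 0"
    and xy: "x = c *\<^sub>R (matrix_inv h *v y)"
    using x unfolding simplex_of_def by blast
  have coords: "p *\<^sub>R y + q *\<^sub>R (\<chi> j. lam j * y $ j) = (\<chi> j. (p + q * lam j) * y $ j)"
    by (simp add: vec_eq_iff algebra_simps)
  have "p *\<^sub>R x + q *\<^sub>R T x = c *\<^sub>R (p *\<^sub>R (matrix_inv h *v y) + q *\<^sub>R (matrix_inv h *v (\<chi> j. lam j * y $ j)))"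
    using lin unfolding xy linear_eigen_columns[OF lin ev y(2), symmetric]
    by (simp add: linear_cmul algebra_simps)
  also have "\<dots> = c *\<^sub>R (matrix_inv h *v (\<chi> j. (p + q * lam j) * y $ j))"
    unfolding coords[symmetric] by (simp add: matrix_vector_right_distrib matrix_vector_mult_scaleR)
  also have "\<dots> \<in> simplex_of h I"
  proof (rule simplex_ofI[OF c])
    show "\<forall>i\<in>I. 0 < (\<chi> j. (p + q * lam j) * y $ j) $ i" using y(1) pos by simp
    show "\<forall>i. i \<notin> I \<longrightarrow> (\<chi> j. (p + q * lam j) * y $ j) $ i = 0" using y(2) by simp
  qed
  finally show ?thesis .
qed

lemma simplex_vertex_approx:
  assumes "i \<in> I" "\<epsilon> > 0"
  shows "matrix_inv h *v axis i 1 + \<epsilon> *\<^sub>R (matrix_inv h *v (\<chi> j. if j \<in> I then 1 else 0))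
    \<in> simplex_of h I"
proof -
  have "matrix_inv h *v axis i 1 + \<epsilon> *\<^sub>R (matrix_inv h *v (\<chi> j. if j \<in> I then 1 else 0))
      = 1 *\<^sub>R (matrix_inv h *v (axis i 1 + \<epsilon> *\<^sub>R (\<chi> j. if j \<in> I then 1 else 0)))"
    by (simp add: matrix_vector_right_distrib matrix_vector_mult_scaleR)
  also have "\<dots> \<in> simplex_of h I"
    using assms by (intro simplex_ofI) (auto simp: axis_def add_nonneg_pos)
  finally show ?thesis .
qed

lemma simplex_vertex_eigenvalue:
  fixes T :: "real^'n \<Rightarrow> real^'n"
  assumes pcd: "properly_convex_domain \<Omega>" and h: "invertible h"
    and S: "simplex_of h I \<subseteq> \<Omega>" and i: "i \<in> I"
    and lin: "linear T" and T_hc: "T ` half_cone \<Omega> (chart \<Omega>) \<subseteq> half_cone \<Omega> (chart \<Omega>)"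
    and inj: "inj T" and ev: "T (matrix_inv h *v axis i 1) = l *\<^sub>R (matrix_inv h *v axis i 1)"
  shows "l > 0" and "\<exists>u. T u = l *\<^sub>R u \<and> 0 < chart \<Omega> \<bullet> u"
proof -
  note \<Omega> = properly_convex_domainD[OF pcd]
  let ?a = "chart \<Omega>"
  define v w where "v = matrix_inv h *v axis i 1"
    and "w = matrix_inv h *v (\<chi> j. if j \<in> I then 1 else (0::real))"
  have "h *v v = axis i 1"
    unfolding v_def by (simp add: matrix_vector_mul_assoc invertible_matrix_inv[OF h])
  hence v0: "v \<noteq> 0" by (auto simp: axis_eq_0_iff)
  have "w \<in> \<Omega>" using S simplex_ofI[of 1 I "\<chi> j. if j \<in> I then 1 else (0::real)" h] i
    unfolding w_def by auto
  hence aw: "?a \<bullet> w \<noteq> 0" by (rule good_chart_inner_nonzero[OF \<Omega>(4)])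
  have vw: "v + \<epsilon> *\<^sub>R w \<in> \<Omega>" if "\<epsilon> > 0" for \<epsilon>
    using S simplex_vertex_approx[OF i that] unfolding v_def w_def by auto
  define \<sigma> where "\<sigma> = sgn (?a \<bullet> v)"
  have \<sigma>: "\<sigma> \<noteq> 0" "0 < ?a \<bullet> (\<sigma> *\<^sub>R v)"
    using good_chart_inner_nonzero_limit[OF \<Omega>(1,4) v0 aw vw] unfolding \<sigma>_def
    by (auto simp: sgn_if)
  have Tu: "T (\<sigma> *\<^sub>R v) = l *\<^sub>R (\<sigma> *\<^sub>R v)" using lin ev unfolding v_def by (simp add: linear_cmul)
  have "\<sigma> *\<^sub>R v + \<epsilon> *\<^sub>R (\<sigma> *\<^sub>R w) \<in> \<Omega>" if "\<epsilon> > 0" for \<epsilon>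
    using pcone_scaleR[OF \<Omega>(1) vw[OF that] \<sigma>(1)] by (simp add: algebra_simps)
  from half_cone_eigenvalue_pos[where T = T, OF lin T_hc inj Tu \<sigma>(2) this] show "l > 0" .
  show "\<exists>u. T u = l *\<^sub>R u \<and> 0 < ?a \<bullet> u" using Tu \<sigma>(2) by blast
qed

lemma simplex_extreme_eigenvalues:
  fixes T :: "real^'n \<Rightarrow> real^'n"
  assumes pcd: "properly_convex_domain \<Omega>" and h: "invertible h" and I: "I \<noteq> {}"
    and S: "simplex_of h I \<subseteq> \<Omega>"
    and lin: "linear T" and T_hc: "T ` half_cone \<Omega> (chart \<Omega>) \<subseteq> half_cone \<Omega> (chart \<Omega>)"
    and inj: "inj T" and ev: "\<forall>j\<in>I. T (matrix_inv h *v axis j 1) = lam j *\<^sub>R (matrix_inv h *v axis j 1)"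
  obtains M m uM um where "0 < m" "m \<le> M" "\<forall>j\<in>I. m \<le> lam j \<and> lam j \<le> M"
    "T uM = M *\<^sub>R uM" "0 < chart \<Omega> \<bullet> uM" "T um = m *\<^sub>R um" "0 < chart \<Omega> \<bullet> um"
proof -
  note vertex = simplex_vertex_eigenvalue[OF pcd h S _ lin T_hc inj]
  define M m where "M = Max (lam ` I)" and "m = Min (lam ` I)"
  have fin: "finite (lam ` I)" "lam ` I \<noteq> {}" using I by auto
  obtain iM im where iM: "iM \<in> I" "lam iM = M" and im: "im \<in> I" "lam im = m"
    using Max_in[OF fin] Min_in[OF fin] unfolding M_def m_def by (metis imageE)
  have bounds: "\<forall>j\<in>I. m \<le> lam j \<and> lam j \<le> M" unfolding M_def m_def using fin(1) by simp
  have "0 < m" using vertex(1)[OF im(1) ev[rule_format, OF im(1)]] im(2) by simp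
  moreover have "m \<le> M" using bounds iM by auto
  moreover obtain uM um where "T uM = M *\<^sub>R uM" "0 < chart \<Omega> \<bullet> uM" "T um = m *\<^sub>R um" "0 < chart \<Omega> \<bullet> um"
    using vertex(2)[OF iM(1) ev[rule_format, OF iM(1)]] vertex(2)[OF im(1) ev[rule_format, OF im(1)]]
      iM(2) im(2) by auto
  ultimately show ?thesis using that bounds by blast
qed

lemma simplex_hilbert_dist_le_eigenvalue_ratio:
  fixes T :: "real^'n \<Rightarrow> real^'n"
  assumes pcd: "properly_convex_domain \<Omega>" and S: "simplex_of h I \<subseteq> \<Omega>"
    and lin: "linear T" and T_hc: "T ` half_cone \<Omega> (chart \<Omega>) \<subseteq> half_cone \<Omega> (chart \<Omega>)"
    and ev: "\<forall>j\<in>I. T (matrix_inv h *v axis j 1) = lam j *\<^sub>R (matrix_inv h *v axis j 1)"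
    and bounds: "\<forall>j\<in>I. m \<le> lam j \<and> lam j \<le> M" and m: "m > 0" "m \<le> M"
    and x: "x \<in> simplex_of h I"
  shows "hilbert_dist \<Omega> x (T x) \<le> ln (M / m) / 2"
proof -
  note \<Omega> = properly_convex_domainD[OF pcd]
  have M: "M > 0" using m by simp
  have hc_bound: "hilbert_dist \<Omega> x (T x) \<le> - ln (1 / M * m) / 2"
    if x: "x \<in> simplex_of h I" "x \<in> half_cone \<Omega> (chart \<Omega>)" for x
  proof (rule hilbert_dist_le[OF pcd x(2)])
    show "T x \<in> half_cone \<Omega> (chart \<Omega>)" using T_hc x(2) by blast
  next
    fix r assume r: "0 \<le> r" "r < 1 / M"
    have "\<forall>j\<in>I. 1 + (- r) * lam j > 0"
    proof
      fix j assume "j \<in> I"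
      hence "r * lam j \<le> r * M" using bounds r(1) by (simp add: mult_left_mono)
      moreover have "r * M < 1" using r M by (simp add: field_simps)
      ultimately show "1 + (- r) * lam j > 0" by simp
    qed
    from simplex_of_eigen_combination[OF lin ev x(1) this]
    show "x - r *\<^sub>R T x \<in> \<Omega>" using S by auto
  next
    fix r assume r: "0 \<le> r" "r < m"
    have "\<forall>j\<in>I. - r + 1 * lam j > 0" using bounds r by force
    from simplex_of_eigen_combination[OF lin ev x(1) this]
    show "T x - r *\<^sub>R x \<in> \<Omega>" using S by auto
  qed (use M m in simp_all)
  have neg: "hilbert_dist \<Omega> (- x) (T (- x)) = hilbert_dist \<Omega> x (T x)"
    using lin by (simp add: linear_neg hilbert_dist_uminus)
  have "- x \<in> simplex_of h I" using simplex_of_scaleR[OF x, of "-1"] by simp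
  moreover have "- ln (1 / M * m) / 2 = ln (M / m) / 2" using M m by (simp add: ln_div ln_mult)
  moreover have "x \<in> half_cone \<Omega> (chart \<Omega>) \<or> - x \<in> half_cone \<Omega> (chart \<Omega>)"
    using half_cone_or_uminus[OF \<Omega>(1,4)] x S by blast
  ultimately show ?thesis using hc_bound[OF x] hc_bound[of "- x"] neg by auto
qed

section \<open>The translation length\<close>

lemma Min_setI:
  assumes "\<Omega> \<noteq> {}" and lower: "\<And>y. y \<in> \<Omega> \<Longrightarrow> L \<le> hilbert_dist \<Omega> y (g *v y)"
    and x: "x \<in> \<Omega>" and upper: "hilbert_dist \<Omega> x (g *v x) \<le> L"
  shows "x \<in> Min_set \<Omega> g"
proof -
  have "translation_length \<Omega> g \<le> hilbert_dist \<Omega> x (g *v x)"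
    unfolding translation_length_def using lower x by (intro cINF_lower bdd_belowI2) auto
  moreover have "L \<le> translation_length \<Omega> g"
    unfolding translation_length_def using assms(1) lower by (intro cINF_greatest) auto
  ultimately show ?thesis using upper x unfolding Min_set_def by simp
qed

theorem mainTheorem12:
  fixes \<Omega> :: "(real^'n) set" and h g :: "real^'n^'n" and I :: "'n set"
  assumes "properly_convex_domain \<Omega>"
    and "invertible h" and "I \<noteq> {}"
    and "properly_embedded (simplex_of h I) \<Omega>"
    and "is_automorphism \<Omega> g"
    and "\<forall>v\<in>simplex_vertices h I. \<exists>c. g *v v = c *\<^sub>R v"
  shows "simplex_of h I \<subseteq> Min_set \<Omega> g"
proof
  have S: "simplex_of h I \<subseteq> \<Omega>" using assms(4) unfolding properly_embedded_def by blast
  obtain \<delta> :: real and T Ti where \<delta>: "\<delta> \<noteq> 0" "T = (\<lambda>x. \<delta> *\<^sub>R (g *v x))"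
    and T: "linear T" "linear Ti" "\<And>x. Ti (T x) = x"
      "T ` half_cone \<Omega> (chart \<Omega>) \<subseteq> half_cone \<Omega> (chart \<Omega>)"
      "Ti ` half_cone \<Omega> (chart \<Omega>) \<subseteq> half_cone \<Omega> (chart \<Omega>)"
    using automorphism_half_cone_normalized[OF assms(1,5)] by blast
  have "inj T" using T(3) by (metis injI)
  have "\<forall>j\<in>I. \<exists>c. g *v (matrix_inv h *v axis j 1) = c *\<^sub>R (matrix_inv h *v axis j 1)"
    using assms(6) unfolding simplex_vertices_def by simp
  then obtain c where "\<forall>j\<in>I. g *v (matrix_inv h *v axis j 1) = c j *\<^sub>R (matrix_inv h *v axis j 1)"
    by (metis bchoice)
  hence ev: "\<forall>j\<in>I. T (matrix_inv h *v axis j 1) = (\<delta> * c j) *\<^sub>R (matrix_inv h *v axis j 1)"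
    unfolding \<delta>(2) by (simp add: matrix_vector_mult_scaleR)
  obtain M m uM um where m: "0 < m" "m \<le> M" and bounds: "\<forall>j\<in>I. m \<le> \<delta> * c j \<and> \<delta> * c j \<le> M"
    and u: "T uM = M *\<^sub>R uM" "0 < chart \<Omega> \<bullet> uM" "T um = m *\<^sub>R um" "0 < chart \<Omega> \<bullet> um"
    by (rule simplex_extreme_eigenvalues[OF assms(1,2,3) S T(1,4) \<open>inj T\<close> ev])
  have "hilbert_dist \<Omega> y (g *v y) = hilbert_dist \<Omega> y (T y)" for y
    unfolding \<delta>(2) using \<delta>(1) by (simp add: hilbert_dist_scaleR_right)
  moreover fix x assume "x \<in> simplex_of h I"
  ultimately show "x \<in> Min_set \<Omega> g"
    using hilbert_dist_ge_eigenvalue_ratio[OF assms(1) T u] m S properly_convex_domainD(3)[OF assms(1)]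
      simplex_hilbert_dist_le_eigenvalue_ratio[OF assms(1) S T(1,4) ev bounds m]
    by (intro Min_setI[of _ "ln (M / m) / 2"]) auto
qed

end
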